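(* Consider a Poisson random hypergraph on $N$ vertices with parameters $(\beta_j)_{j\ge2}$ such that, for some $k\ge3$, $\beta_j=1/(j(j-1))$ for all $2\le j\le k-1$, and let $\mu_k=k(k-1)\beta_k-1$. Fix $0\le r<1$. Then there exist a constant $C<\infty$ and $N_0$ such that for all $N\ge N_0$ and all real $0\le t\le rN$: $$\Big|N\lambda_2(N,t)-\Big(\sum_{i=0}^{k-3}\big(\tfrac tN\big)^i+k(k-1)\beta_k\big(\tfrac tN\big)^{k-2}\Big)\Big|\le C\Big(\tfrac{(\log N)^2}{N}+\big(\tfrac tN\big)^{k-1}\Big),$$ and $$\Big|a_N(t)-1-\mu_k\big(\tfrac tN\big)^{k-2}\Big|\le\beta''(r)\,\frac{|Z_N(t)|+P_N(t)}{N}+C\Big(\tfrac{(\log N)^2}{N}+\big(\tfrac tN\big)^{k-1}\Big).$$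
   Context: Poisson random hypergraph: vertex set $\{1,\dots,N\}$; $(\beta_j)_{j\ge2}$ nonnegative reals, $\beta(t)=\sum_{j\ge2}\beta_jt^j$ with $\beta'(1)<\infty$; for each $A$ with $|A|=j\ge2$, the number of hyperedges on $A$ is Poisson with mean $N\beta_j/\binom{N}{j}$, independently. A 1-edge is a patch; deleting a patched vertex $v$ removes it and replaces each other hyperedge containing $v$ by the hyperedge on its remaining vertices. Breadth-first walk: put a patch on the lowest-labelled vertex, call it $v(1)$. Having processed $v(1),\dots,v(i-1)$, the children of $v(i)$ are the not-yet-numbered vertices $w$ such that some original hyperedge consists of $v(i)$, $w$ and a subset of $\{v(1),\dots,v(i-1)\}$; they get the next numbers in order of original label, then $v(i)$ is deleted; if no numbered-but-undeleted vertex remains, a patch is placed on the lowest-labelled un-numbered vertex, which becomes the next numbered vertex. With $C_N(i)$ the number of children of $v(i)$: $Z_N(0)=0$, $Z_N(i)=Z_N(i-1)+C_N(i)-1$; $P_N(0)=1$, $P_N(i)=1-\min_{j\le i}Z_N(j)$. For integer $i$, $\lambda_2(N,i)=N\sum_{j=0}^{i}\beta_{j+2}\binom{i}{j}/\binom{N}{j+2}$; for real $t$, $\lambda_2(N,t)=\lambda_2(N,\lfloor t\rfloor)$ and $P_N(t)=P_N(\lfloor t\rfloor)$. Exponential interpolation of $Z_N$: for $1\le i\le N$ let $(E_{i,j})_{1\le j\le N-(i-1)-Z_N(i-1)-P_N(i-1)}$ be, conditionally on the past, i.i.d. exponential with rate $\lambda_2(N,i-1)$, coupled so that $C_N(i)=\#\{j:E_{i,j}\le1\}$,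 and for $0\le u\le1$ set $Z_N(i-1+u)=Z_N(i-1)-u+\sum_j\mathbb{1}_{\{E_{i,j}\le u\}}$. Finally $a_N(t)=(N-t-Z_N(t)-P_N(t))\lambda_2(N,t)$. *)

theory Defs
  imports "HOL-Analysis.Analysis"
begin

text \<open>Poisson random hypergraph on vertex set {1..N}: a realisation is described by
  H :: nat set => nat, H A = number of hyperedges on the vertex set A
  (only sets A with A a subset of {1..N} and card A >= 2 are relevant).\<close>

definition lambda2 :: "(nat \<Rightarrow> real) \<Rightarrow> nat \<Rightarrow> nat \<Rightarrow> real" where
  "lambda2 \<beta> N i = real N * (\<Sum>j=0..i. \<beta> (j+2) * real (i choose j) / real (N choose (j+2)))"

definition lambda2_real :: "(nat \<Rightarrow> real) \<Rightarrow> nat \<Rightarrow> real \<Rightarrow> real" where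
  "lambda2_real \<beta> N t = lambda2 \<beta> N (nat \<lfloor>t\<rfloor>)"

text \<open>Children of the vertex ord!i (the (i+1)-st numbered vertex), where ord is the list of
  numbered vertices in order and the first i of them have been deleted.\<close>
definition bfw_children :: "nat \<Rightarrow> (nat set \<Rightarrow> nat) \<Rightarrow> nat list \<Rightarrow> nat \<Rightarrow> nat set" where
  "bfw_children N H ord i =
     (if i < length ord then
        {w \<in> {1..N}. w \<notin> set ord \<and>
           (\<exists>A. A \<subseteq> {1..N} \<and> 0 < H A \<and> ord ! i \<in> A \<and> w \<in> A \<and> A - {ord ! i, w} \<subseteq> set (take i ord))}
      else {})"

definition bfw_step :: "nat \<Rightarrow> (nat set \<Rightarrow> nat) \<Rightarrow> nat list \<Rightarrow> nat \<Rightarrow> nat list" where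
  "bfw_step N H ord i =
     (if i < length ord then
        (let ord1 = ord @ sorted_list_of_set (bfw_children N H ord i) in
         if length ord1 = Suc i \<and> {1..N} - set ord1 \<noteq> {}
         then ord1 @ [Min ({1..N} - set ord1)] else ord1)
      else ord)"

text \<open>Numbered vertices (in order of numbering) after processing v(1),...,v(i).\<close>
primrec bfw_order :: "nat \<Rightarrow> (nat set \<Rightarrow> nat) \<Rightarrow> nat \<Rightarrow> nat list" where
  "bfw_order N H 0 = (if 1 \<le> N then [1] else [])"
| "bfw_order N H (Suc i) = bfw_step N H (bfw_order N H i) i"

text \<open>C_N(i), for i >= 1: number of children of v(i).\<close>
definition Cnum :: "nat \<Rightarrow> (nat set \<Rightarrow> nat) \<Rightarrow> nat \<Rightarrow> nat" where
  "Cnum N H i = card (bfw_children N H (bfw_order N H (i - 1)) (i - 1))"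

primrec Zw :: "nat \<Rightarrow> (nat set \<Rightarrow> nat) \<Rightarrow> nat \<Rightarrow> int" where
  "Zw N H 0 = 0"
| "Zw N H (Suc i) = Zw N H i + int (Cnum N H (Suc i)) - 1"

definition Pw :: "nat \<Rightarrow> (nat set \<Rightarrow> nat) \<Rightarrow> nat \<Rightarrow> int" where
  "Pw N H i = 1 - Min (Zw N H ` {..i})"

text \<open>Number of exponential clocks at step i (i >= 1): N-(i-1)-Z_N(i-1)-P_N(i-1).\<close>
definition Mcount :: "nat \<Rightarrow> (nat set \<Rightarrow> nat) \<Rightarrow> nat \<Rightarrow> int" where
  "Mcount N H i = int N - int (i - 1) - Zw N H (i - 1) - Pw N H (i - 1)"

text \<open>Admissible values of the exponential clocks E i j (positive reals, coupled to C_N(i)).\<close>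
definition exp_consistent :: "nat \<Rightarrow> (nat set \<Rightarrow> nat) \<Rightarrow> (nat \<Rightarrow> nat \<Rightarrow> real) \<Rightarrow> bool" where
  "exp_consistent N H E =
     (\<forall>i\<in>{1..N}. (\<forall>j. 1 \<le> j \<and> int j \<le> Mcount N H i \<longrightarrow> 0 < E i j) \<and>
        Cnum N H i = card {j. 1 \<le> j \<and> int j \<le> Mcount N H i \<and> E i j \<le> 1})"

definition Zt :: "nat \<Rightarrow> (nat set \<Rightarrow> nat) \<Rightarrow> (nat \<Rightarrow> nat \<Rightarrow> real) \<Rightarrow> real \<Rightarrow> real" where
  "Zt N H E t =
     (let i = nat \<lfloor>t\<rfloor>; u = t - real i in
      real_of_int (Zw N H i) - u +
      real (card {j. 1 \<le> j \<and> int j \<le> Mcount N H (Suc i) \<and> E (Suc i) j \<le> u}))"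

definition Pt :: "nat \<Rightarrow> (nat set \<Rightarrow> nat) \<Rightarrow> real \<Rightarrow> real" where
  "Pt N H t = real_of_int (Pw N H (nat \<lfloor>t\<rfloor>))"

definition aN :: "(nat \<Rightarrow> real) \<Rightarrow> nat \<Rightarrow> (nat set \<Rightarrow> nat) \<Rightarrow> (nat \<Rightarrow> nat \<Rightarrow> real) \<Rightarrow> real \<Rightarrow> real" where
  "aN \<beta> N H E t = (real N - t - Zt N H E t - Pt N H t) * lambda2_real \<beta> N t"

definition beta2 :: "(nat \<Rightarrow> real) \<Rightarrow> real \<Rightarrow> real" where
  "beta2 \<beta> x = (\<Sum>j. real j * real (j - 1) * \<beta> j * x ^ (j - 2))"

end

theory Submission
  imports Defs
begin

text \<open>
  From C(N, j+2) (j+2)(j+1) = N (N-1) C(N-2, j) one gets N \<lambda>2(N,i) = \<Sum>j b_j w_N(i,j), where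
  b_j = (j+2)(j+1) \<beta>_(j+2) are the Taylor coefficients of \<beta>'' at 0 and the weight
  w_N(i,j) = N/(N-1) C(i,j)/C(N-2,j) equals (i/N)^j + O(j^2/N). The hypothesis on \<beta> says that
  b_j = 1 for j \<le> k-3, and b_(k-2) = k(k-1) \<beta>_k, so the terms j \<le> k-2 give the polynomial up to
  O(1/N). The weights of the terms j \<ge> k-1 are at most 2 (i/(N-2))^j, so these terms are bounded
  by (2t/N)^(k-1) times \<Sum>j b_j \<rho>^j with \<rho> = (1+r)/2 < 1, a series that converges because
  \<beta>'(1) < \<infinity>.

  With x = t/N one has a_N = (1-x) N \<lambda>2 - ((Z+P)/N) N \<lambda>2. The first term is controlled by
  (1-x)(1 + ... + x^(k-3) + c x^(k-2)) = 1 + (c-1) x^(k-2) - c x^(k-1), the second by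
  N \<lambda>2 \<le> \<beta>''(r) + O(1/N + x^(k-1)) and |Z| + P \<le> 3N. The error is in fact O(1/N), so (log N)^2/N
  may be replaced by any \<delta>_N \<ge> 1/N.
\<close>

section \<open>Ratios of binomial coefficients\<close>

lemma power_diff_le_mult_diff:
  fixes a b :: real
  assumes "0 \<le> b" "b \<le> a" "a \<le> 1"
  shows "a ^ n - b ^ n \<le> real n * (a - b)"
proof (induction n)
  case 0
  then show ?case by simp
next
  case (Suc n)
  have "a ^ Suc n - b ^ Suc n = a * (a ^ n - b ^ n) + b ^ n * (a - b)"
    by (simp add: algebra_simps)
  also have "\<dots> \<le> 1 * (a ^ n - b ^ n) + 1 * (a - b)"
  proof (rule add_mono)
    have "0 \<le> a ^ n - b ^ n" using assms by (simp add: power_mono)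
    then show "a * (a ^ n - b ^ n) \<le> 1 * (a ^ n - b ^ n)"
      using assms by (intro mult_right_mono) auto
    show "b ^ n * (a - b) \<le> 1 * (a - b)"
      using assms by (intro mult_right_mono) (auto intro: power_le_one)
  qed
  also have "\<dots> \<le> real (Suc n) * (a - b)" using Suc by (simp add: algebra_simps)
  finally show ?case .
qed

lemma binomial_ratio_eq_prod:
  "real (i choose j) / real (M choose j) = (\<Prod>l=0..<j. (real i - real l) / (real M - real l))"
  by (simp add: binomial_gbinomial gbinomial_prod_rev prod_dividef)

lemma binomial_ratio_le_power:
  assumes "i \<le> M"
  shows "real (i choose j) / real (M choose j) \<le> (real i / real M) ^ j"
proof (cases "j \<le> i")
  case True
  have "(\<Prod>l=0..<j. (real i - real l) / (real M - real l)) \<le> (\<Prod>l=0..<j. real i / real M)"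
  proof (rule prod_mono)
    fix l assume "l \<in> {0..<j}"
    then have "l < i" "i \<le> M" using True assms by auto
    then show "0 \<le> (real i - real l) / (real M - real l) \<and>
        (real i - real l) / (real M - real l) \<le> real i / real M"
      by (auto simp: field_simps intro: mult_right_mono)
  qed
  then show ?thesis by (simp add: binomial_ratio_eq_prod)
qed (simp add: binomial_eq_0)

lemma power_le_binomial_ratio:
  assumes "j \<le> i" "i \<le> M"
  shows "((real i - real j) / real M) ^ j \<le> real (i choose j) / real (M choose j)"
proof -
  have "(\<Prod>l=0..<j. (real i - real j) / real M) \<le> (\<Prod>l=0..<j. (real i - real l) / (real M - real l))"
  proof (rule prod_mono)
    fix l assume "l \<in> {0..<j}"
    then have "l < j" by simp
    then show "0 \<le> (real i - real j) / real M \<and>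
        (real i - real j) / real M \<le> (real i - real l) / (real M - real l)"
      using assms by (auto intro!: frac_le)
  qed
  then show ?thesis by (simp add: binomial_ratio_eq_prod)
qed

section \<open>Expansion of \<open>\<lambda>\<^sub>2\<close>\<close>

definition beta2_coeff :: "(nat \<Rightarrow> real) \<Rightarrow> nat \<Rightarrow> real" where
  "beta2_coeff \<beta> j = real (j + 2) * real (j + 1) * \<beta> (j + 2)"

definition lambda2_weight :: "nat \<Rightarrow> nat \<Rightarrow> nat \<Rightarrow> real" where
  "lambda2_weight N i j = real N / (real N - 1) * (real (i choose j) / real ((N - 2) choose j))"

lemma binomial_absorption_two:
  assumes "2 \<le> N"
  shows "(N choose (j + 2)) * ((j + 2) * (j + 1)) = N * (N - 1) * ((N - 2) choose j)"
proof -
  obtain n where N: "N = Suc (Suc n)" using assms by (metis add_2_eq_Suc le_Suc_ex)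
  have "(N choose (j + 2)) * ((j + 2) * (j + 1)) = (Suc (Suc j) * (N choose Suc (Suc j))) * Suc j"
    by (simp add: algebra_simps)
  also have "\<dots> = N * (Suc j * (Suc n choose Suc j))"
    by (metis N Suc_times_binomial mult.assoc mult.commute)
  also have "\<dots> = N * (N - 1) * ((N - 2) choose j)"
    unfolding Suc_times_binomial by (simp add: N algebra_simps)
  finally show ?thesis .
qed

lemma lambda2_eq_sum_weight:
  assumes "2 \<le> N"
  shows "real N * lambda2 \<beta> N i = (\<Sum>j=0..i. beta2_coeff \<beta> j * lambda2_weight N i j)"
  unfolding lambda2_def sum_distrib_left
proof (rule sum.cong)
  fix j
  define c where "c = real (N choose (j + 2))"
  define d where "d = real ((N - 2) choose j)"
  define w where "w = real ((j + 2) * (j + 1))"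
  have w: "w \<noteq> 0" "beta2_coeff \<beta> j = w * \<beta> (j + 2)"
    unfolding w_def beta2_coeff_def by (simp only: of_nat_eq_0_iff) (simp_all add: algebra_simps)
  have N: "real N \<noteq> 0" "real N - 1 \<noteq> 0" "real (N - 1) = real N - 1" using assms by auto
  have "c * w = real N * real (N - 1) * d"
    unfolding c_def d_def w_def of_nat_mult[symmetric] binomial_absorption_two[OF assms] ..
  then have c: "c = real N * (real N - 1) * d / w"
    using w N by (simp add: eq_divide_eq)
  show "real N * (real N * (\<beta> (j + 2) * real (i choose j) / c)) =
      beta2_coeff \<beta> j * lambda2_weight N i j"
  proof (cases "d = 0")
    case True
    then show ?thesis by (simp add: c lambda2_weight_def d_def)
  next
    case False
    then show ?thesis using w N
      unfolding c lambda2_weight_def d_def[symmetric] by (simp add: field_simps)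
  qed
qed simp

lemma lambda2_weight_nonneg: "0 \<le> lambda2_weight N i j"
  by (cases N) (simp_all add: lambda2_weight_def)

lemma lambda2_weight_eq_0: "i < j \<Longrightarrow> lambda2_weight N i j = 0"
  by (simp add: lambda2_weight_def)

lemma lambda2_weight_le_power:
  assumes "2 \<le> N" "i \<le> N - 2"
  shows "lambda2_weight N i j \<le> 2 * (real i / real (N - 2)) ^ j"
proof -
  have "real N / (real N - 1) \<le> 2" using assms by (simp add: field_simps)
  then show ?thesis unfolding lambda2_weight_def
    using binomial_ratio_le_power[OF assms(2), of j]
    by (intro mult_mono) auto
qed

lemma lambda2_weight_approx:
  assumes N: "4 \<le> N" and ji: "j \<le> i" and iN: "i \<le> N - 2"
  shows "\<bar>lambda2_weight N i j - (real i / real N) ^ j\<bar> \<le> 2 * (real j + 1)\<^sup>2 / real N"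
proof -
  define R where "R = real (i choose j) / real ((N - 2) choose j)"
  define a where "a = real i / real (N - 2)"
  define y where "y = real i / real N"
  have Npos: "4 \<le> real N" and N2: "real (N - 2) = real N - 2" and iN': "real i \<le> real N - 2"
    using N iN by linarith+
  have w: "lambda2_weight N i j = R + R / (real N - 1)"
    unfolding lambda2_weight_def R_def[symmetric] using Npos by (simp add: field_simps)
  have "a - y = 2 * real i / (real N * (real N - 2))"
    unfolding a_def y_def N2 using Npos by (simp add: field_simps)
  also have "\<dots> \<le> 2 * (real N - 2) / (real N * (real N - 2))"
    using iN' Npos by (intro divide_right_mono) auto
  also have "\<dots> = 2 / real N" using Npos by (simp add: field_simps)
  finally have "a - y \<le> 2 / real N" .
  moreover have "0 \<le> y" "y \<le> a" "a \<le> 1"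
    unfolding a_def y_def N2 using Npos iN' by (auto intro: divide_left_mono)
  ultimately have a: "0 \<le> y" "y \<le> a" "a \<le> 1" "a - y \<le> 2 / real N" by auto
  have R_le: "R \<le> a ^ j" "0 \<le> R"
    unfolding R_def a_def using binomial_ratio_le_power[OF iN] by auto
  have "((real i - real j) / real N) ^ j \<le> ((real i - real j) / real (N - 2)) ^ j"
    using ji Npos by (intro power_mono divide_left_mono) (auto simp: N2)
  also have "\<dots> \<le> R" unfolding R_def using power_le_binomial_ratio[OF ji iN] .
  finally have R_ge: "((real i - real j) / real N) ^ j \<le> R" .
  have "R / (real N - 1) \<le> 1 / (real N - 1)"
    using R_le a Npos by (intro divide_right_mono) (auto intro: order_trans power_le_one)
  also have "\<dots> \<le> 2 / real N" using Npos by (simp add: field_simps)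
  finally have small: "R / (real N - 1) \<le> 2 / real N" .
  have "a ^ j - y ^ j \<le> real j * (a - y)" using power_diff_le_mult_diff a by simp
  also have "\<dots> \<le> real j * (2 / real N)" using a by (intro mult_left_mono) auto
  moreover have "(2 * real j + 2) / real N = real j * (2 / real N) + 2 / real N"
    by (simp add: add_divide_distrib)
  ultimately have up: "lambda2_weight N i j - y ^ j \<le> (2 * real j + 2) / real N"
    using w R_le small by linarith
  have "(real i - real j) / real N = y - real j / real N"
    unfolding y_def by (simp add: diff_divide_distrib)
  then have "y ^ j - ((real i - real j) / real N) ^ j \<le> real j * (real j / real N)"
    using power_diff_le_mult_diff[of "y - real j / real N" y j] a ji by (auto simp: y_def divide_right_mono)
  moreover have "0 \<le> R / (real N - 1)" using R_le Npos by simp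
  ultimately have low: "y ^ j - lambda2_weight N i j \<le> real j * real j / real N"
    using w R_ge by simp
  have "(2 * real j + 2) / real N \<le> 2 * (real j + 1)\<^sup>2 / real N"
    "real j * real j / real N \<le> 2 * (real j + 1)\<^sup>2 / real N"
    using Npos by (auto intro!: divide_right_mono simp: power2_eq_square algebra_simps)
  then show ?thesis using up low unfolding y_def by linarith
qed

lemma lambda2_weight_approx_real:
  assumes N: "4 \<le> N" and t: "0 \<le> t" "t \<le> real N - 2"
  shows "\<bar>lambda2_weight N (nat \<lfloor>t\<rfloor>) j - (t / real N) ^ j\<bar> \<le> 3 * (real j + 1)\<^sup>2 / real N"
proof -
  define i where "i = nat \<lfloor>t\<rfloor>"
  have Npos: "4 \<le> real N" using N by simp
  have it: "real i \<le> t" "t < real i + 1" unfolding i_def using t by linarith+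
  have iN: "i \<le> N - 2" using it t N by linarith
  have x: "0 \<le> t / real N" "t / real N \<le> 1" using t Npos by auto
  have "real j + 1 \<le> (real j + 1)\<^sup>2"
    using mult_right_mono[of 1 "real j + 1" "real j + 1"] by (simp add: power2_eq_square)
  then have j_le: "real j \<le> (real j + 1)\<^sup>2" by simp
  show ?thesis
  proof (cases "j \<le> i")
    case True
    have "(t / real N) ^ j - (real i / real N) ^ j \<le> real j * (t / real N - real i / real N)"
      using power_diff_le_mult_diff it x by (simp add: divide_right_mono)
    also have "\<dots> \<le> real j * (1 / real N)"
      using it Npos
      by (intro mult_left_mono) (simp_all add: diff_divide_distrib[symmetric] divide_right_mono)
    finally have "\<bar>(t / real N) ^ j - (real i / real N) ^ j\<bar> \<le> real j / real N"
      using it Npos by (simp add: divide_right_mono power_mono)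
    moreover have "real j / real N + 2 * (real j + 1)\<^sup>2 / real N \<le> 3 * (real j + 1)\<^sup>2 / real N"
      using j_le Npos by (simp add: add_divide_distrib[symmetric] divide_right_mono)
    ultimately show ?thesis
      using lambda2_weight_approx[OF N True iN] unfolding i_def by linarith
  next
    case False
    have "(t / real N) ^ j \<le> t / real N" using power_decreasing[of 1 j "t / real N"] False x by simp
    also have "\<dots> \<le> real j / real N" using False it Npos by (intro divide_right_mono) auto
    also have "\<dots> \<le> 3 * (real j + 1)\<^sup>2 / real N"
      using j_le Npos by (simp add: divide_right_mono)
    finally show ?thesis using False x by (simp add: lambda2_weight_eq_0 i_def)
  qed
qed

lemma beta2_coeff_nonneg:
  fixes \<beta> :: "nat \<Rightarrow> real"
  assumes "\<And>j. 2 \<le> j \<Longrightarrow> 0 \<le> \<beta> j"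
  shows "0 \<le> beta2_coeff \<beta> j"
  unfolding beta2_coeff_def using assms by simp

lemma lambda2_tail_le:
  fixes \<beta> :: "nat \<Rightarrow> real" and \<rho> t :: real
  assumes nonneg: "\<And>j. 2 \<le> j \<Longrightarrow> 0 \<le> \<beta> j"
    and summable: "summable (\<lambda>j. beta2_coeff \<beta> j * \<rho> ^ j)"
    and \<rho>: "0 < \<rho>" and N: "4 \<le> N"
    and i: "i \<le> N - 2" "real i \<le> t" "t \<le> \<rho> * (real N - 2)"
  shows "(\<Sum>j\<in>{m<..i}. beta2_coeff \<beta> j * lambda2_weight N i j)
    \<le> 2 ^ (m + 2) * (\<Sum>j. beta2_coeff \<beta> j * \<rho> ^ j) / \<rho> ^ (m + 1) * (t / real N) ^ (m + 1)"
proof -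
  define a where "a = real i / real (N - 2)"
  define D where "D = 2 ^ (m + 2) * (t / real N) ^ (m + 1) / \<rho> ^ (m + 1)"
  have Npos: "4 \<le> real N" and N2: "real (N - 2) = real N - 2" using N by auto
  have t0: "0 \<le> t" using i(2) of_nat_0_le_iff order_trans by blast
  have a: "0 \<le> a" "a \<le> \<rho>" "a \<le> 2 * (t / real N)"
  proof -
    show "0 \<le> a" "a \<le> \<rho>" unfolding a_def N2 using i Npos by (auto simp: field_simps)
    have "a \<le> t / (real N - 2)" unfolding a_def N2 using i Npos by (simp add: divide_right_mono)
    also have "\<dots> \<le> t / (real N / 2)" using i Npos by (intro divide_left_mono) auto
    finally show "a \<le> 2 * (t / real N)" by (simp add: mult.commute)
  qed
  have "beta2_coeff \<beta> j * lambda2_weight N i j \<le> D * (beta2_coeff \<beta> j * \<rho> ^ j)"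
    if j: "j \<in> {m<..i}" for j
  proof -
    have "a ^ j = a ^ (m + 1) * a ^ (j - (m + 1))"
      using j by (simp only: power_add[symmetric]) simp
    moreover have "lambda2_weight N i j \<le> 2 * a ^ j"
      unfolding a_def using N i(1) by (intro lambda2_weight_le_power) auto
    ultimately have "lambda2_weight N i j \<le> 2 * (a ^ (m + 1) * a ^ (j - (m + 1)))"
      by (simp only:)
    also have "\<dots> \<le> 2 * ((2 * (t / real N)) ^ (m + 1) * \<rho> ^ (j - (m + 1)))"
      using a t0 Npos by (intro mult_left_mono mult_mono power_mono) auto
    also have "\<dots> = D * \<rho> ^ j"
      using j \<rho> by (simp add: D_def power_diff power_mult_distrib[symmetric] times_divide_eq_right)
    finally have "beta2_coeff \<beta> j * lambda2_weight N i j \<le> beta2_coeff \<beta> j * (D * \<rho> ^ j)"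
      by (rule mult_left_mono) (rule beta2_coeff_nonneg[OF nonneg])
    then show ?thesis by (simp add: mult_ac)
  qed
  then have "(\<Sum>j\<in>{m<..i}. beta2_coeff \<beta> j * lambda2_weight N i j)
      \<le> D * (\<Sum>j\<in>{m<..i}. beta2_coeff \<beta> j * \<rho> ^ j)"
    unfolding sum_distrib_left by (rule sum_mono)
  also have "\<dots> \<le> D * (\<Sum>j. beta2_coeff \<beta> j * \<rho> ^ j)"
    using i \<rho> beta2_coeff_nonneg[OF nonneg]
    by (intro mult_left_mono sum_le_suminf[OF summable]) (auto simp: D_def)
  finally show ?thesis by (simp add: D_def mult_ac)
qed

lemma lambda2_expansion:
  fixes \<beta> :: "nat \<Rightarrow> real" and \<rho> t :: real
  assumes nonneg: "\<And>j. 2 \<le> j \<Longrightarrow> 0 \<le> \<beta> j"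
    and summable: "summable (\<lambda>j. beta2_coeff \<beta> j * \<rho> ^ j)"
    and \<rho>: "0 < \<rho>" "\<rho> \<le> 1" and N: "4 \<le> N"
    and t: "0 \<le> t" "t \<le> \<rho> * (real N - 2)"
  shows "\<bar>real N * lambda2_real \<beta> N t - (\<Sum>j\<le>m. beta2_coeff \<beta> j * (t / real N) ^ j)\<bar>
    \<le> 3 * (\<Sum>j\<le>m. beta2_coeff \<beta> j * (real j + 1)\<^sup>2) / real N
      + 2 ^ (m + 2) * (\<Sum>j. beta2_coeff \<beta> j * \<rho> ^ j) / \<rho> ^ (m + 1) * (t / real N) ^ (m + 1)"
proof -
  define i where "i = nat \<lfloor>t\<rfloor>"
  define f where "f j = beta2_coeff \<beta> j * lambda2_weight N i j" for j
  have b: "0 \<le> beta2_coeff \<beta> j" for j using beta2_coeff_nonneg[OF nonneg] .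
  have "\<rho> * (real N - 2) \<le> real N - 2" using \<rho> N by (simp add: mult_left_le_one_le)
  then have tN: "t \<le> real N - 2" using t by linarith
  have i: "i \<le> N - 2" "real i \<le> t" unfolding i_def using t tN by linarith+
  have "(\<Sum>j\<le>i. f j) = (\<Sum>j\<in>{..i} \<inter> {..m}. f j) + (\<Sum>j\<in>{..i} - {..m}. f j)"
    by (rule sum.Int_Diff) simp
  also have "(\<Sum>j\<in>{..i} \<inter> {..m}. f j) = (\<Sum>j\<le>m. f j)"
    by (rule sum.mono_neutral_left) (auto simp: f_def lambda2_weight_eq_0)
  also have "{..i} - {..m} = {m<..i}" by auto
  finally have split: "real N * lambda2_real \<beta> N t = (\<Sum>j\<le>m. f j) + (\<Sum>j\<in>{m<..i}. f j)"
    using lambda2_eq_sum_weight[of N \<beta> i] N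
    by (simp add: lambda2_real_def i_def f_def atLeast0AtMost)
  have "\<bar>(\<Sum>j\<le>m. f j) - (\<Sum>j\<le>m. beta2_coeff \<beta> j * (t / real N) ^ j)\<bar>
      \<le> (\<Sum>j\<le>m. beta2_coeff \<beta> j * \<bar>lambda2_weight N i j - (t / real N) ^ j\<bar>)"
    unfolding f_def sum_subtractf[symmetric] using b
    by (auto intro: order_trans[OF sum_abs] simp: abs_mult right_diff_distrib[symmetric])
  also have "\<dots> \<le> (\<Sum>j\<le>m. beta2_coeff \<beta> j * (3 * (real j + 1)\<^sup>2 / real N))"
    unfolding i_def using lambda2_weight_approx_real[OF N t(1) tN] b
    by (intro sum_mono mult_left_mono) auto
  finally have head: "\<bar>(\<Sum>j\<le>m. f j) - (\<Sum>j\<le>m. beta2_coeff \<beta> j * (t / real N) ^ j)\<bar>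
      \<le> 3 * (\<Sum>j\<le>m. beta2_coeff \<beta> j * (real j + 1)\<^sup>2) / real N"
    by (simp add: sum_distrib_left sum_divide_distrib mult_ac)
  have "0 \<le> (\<Sum>j\<in>{m<..i}. f j)"
    unfolding f_def using b lambda2_weight_nonneg by (intro sum_nonneg mult_nonneg_nonneg)
  then show ?thesis
    using split head lambda2_tail_le[OF nonneg summable \<rho>(1) N i t(2), of m]
    unfolding f_def by linarith
qed

section \<open>Taylor coefficients of \<open>\<beta>''\<close>\<close>

lemma summable_beta2_coeff:
  fixes \<beta> :: "nat \<Rightarrow> real"
  assumes nonneg: "\<And>j. 2 \<le> j \<Longrightarrow> 0 \<le> \<beta> j"
    and deriv_finite: "summable (\<lambda>j. real j * \<beta> j)"
    and \<rho>: "0 \<le> \<rho>" "\<rho> < 1"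
  shows "summable (\<lambda>j. beta2_coeff \<beta> j * \<rho> ^ j)"
proof (rule summable_comparison_test)
  have "summable (\<lambda>j. real (j + 2) * \<beta> (j + 2))"
    using deriv_finite summable_iff_shift[of "\<lambda>j. real j * \<beta> j" 2] by simp
  then show "summable (\<lambda>j. real (j + 2) * \<beta> (j + 2) * (1 / (1 - \<rho>)))"
    by (rule summable_mult2)
  have "norm (beta2_coeff \<beta> j * \<rho> ^ j) \<le> real (j + 2) * \<beta> (j + 2) * (1 / (1 - \<rho>))" for j
  proof -
    have "real (j + 1) * \<rho> ^ j = (\<Sum>l\<le>j. \<rho> ^ j)" by simp
    also have "\<dots> \<le> (\<Sum>l\<le>j. \<rho> ^ l)" using \<rho> by (intro sum_mono power_decreasing) auto
    also have "\<dots> = (1 - \<rho> ^ Suc j) / (1 - \<rho>)"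
      using sum_gp_basic[of \<rho> j] \<rho> by (simp add: field_simps atLeast0AtMost)
    also have "\<dots> \<le> 1 / (1 - \<rho>)" using \<rho> by (intro divide_right_mono) auto
    finally have "real (j + 1) * \<rho> ^ j \<le> 1 / (1 - \<rho>)" .
    moreover have "norm (beta2_coeff \<beta> j * \<rho> ^ j) = real (j + 2) * \<beta> (j + 2) * (real (j + 1) * \<rho> ^ j)"
      using nonneg[of "j + 2"] \<rho> unfolding beta2_coeff_def by (simp add: abs_mult)
    moreover have "0 \<le> real (j + 2) * \<beta> (j + 2)" using nonneg[of "j + 2"] by simp
    ultimately show ?thesis by (metis mult_left_mono)
  qed
  then show "\<exists>N. \<forall>n\<ge>N. norm (beta2_coeff \<beta> n * \<rho> ^ n) \<le> real (n + 2) * \<beta> (n + 2) * (1 / (1 - \<rho>))"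
    by blast
qed

lemma beta2_eq_suminf:
  assumes "summable (\<lambda>j. beta2_coeff \<beta> j * x ^ j)"
  shows "beta2 \<beta> x = (\<Sum>j. beta2_coeff \<beta> j * x ^ j)"
proof -
  define g where "g j = real j * real (j - 1) * \<beta> j * x ^ (j - 2)" for j
  have shift: "g (j + 2) = beta2_coeff \<beta> j * x ^ j" for j
    unfolding g_def beta2_coeff_def by (simp add: algebra_simps)
  have "summable g" by (subst summable_iff_shift[of g 2, symmetric]) (simp only: shift assms)
  have "beta2 \<beta> x = suminf g" unfolding beta2_def g_def ..
  also have "\<dots> = (\<Sum>j. g (j + 2)) + (\<Sum>j<2. g j)"
    by (rule suminf_split_initial_segment[OF \<open>summable g\<close>])
  also have "(\<Sum>j<2. g j) = 0" unfolding g_def by (simp add: numeral_2_eq_2)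
  finally show ?thesis unfolding shift by simp
qed

lemma sum_beta2_coeff_le_beta2:
  fixes \<beta> :: "nat \<Rightarrow> real"
  assumes nonneg: "\<And>j. 2 \<le> j \<Longrightarrow> 0 \<le> \<beta> j"
    and deriv_finite: "summable (\<lambda>j. real j * \<beta> j)"
    and x: "0 \<le> x" "x \<le> r" "r < 1"
  shows "(\<Sum>j\<le>m. beta2_coeff \<beta> j * x ^ j) \<le> beta2 \<beta> r"
proof -
  have b: "0 \<le> beta2_coeff \<beta> j" for j using beta2_coeff_nonneg[OF nonneg] .
  have "(\<Sum>j\<le>m. beta2_coeff \<beta> j * x ^ j) \<le> (\<Sum>j\<le>m. beta2_coeff \<beta> j * r ^ j)"
    using b x by (intro sum_mono mult_left_mono power_mono) auto
  also have "\<dots> \<le> (\<Sum>j. beta2_coeff \<beta> j * r ^ j)"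
    using b x by (intro sum_le_suminf summable_beta2_coeff[OF nonneg deriv_finite]) auto
  also have "\<dots> = beta2 \<beta> r"
    using x by (intro beta2_eq_suminf[symmetric] summable_beta2_coeff[OF nonneg deriv_finite]) auto
  finally show ?thesis .
qed

lemma sum_beta2_coeff_power_eq:
  fixes \<beta> :: "nat \<Rightarrow> real"
  assumes k3: "3 \<le> k"
    and beta_low: "\<And>j. 2 \<le> j \<Longrightarrow> j \<le> k - 1 \<Longrightarrow> \<beta> j = 1 / (real j * (real j - 1))"
  shows "(\<Sum>j\<le>k-2. beta2_coeff \<beta> j * x ^ j)
    = (\<Sum>j\<le>k-3. x ^ j) + real k * (real k - 1) * \<beta> k * x ^ (k - 2)"
proof -
  have "beta2_coeff \<beta> j = 1" if "j \<le> k - 3" for j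
  proof -
    have "\<beta> (j + 2) = 1 / (real (j + 2) * (real (j + 2) - 1))"
      using that k3 by (intro beta_low) auto
    also have "real (j + 2) * (real (j + 2) - 1) = real ((j + 2) * (j + 1))"
      by (simp add: algebra_simps)
    finally have "\<beta> (j + 2) = 1 / real ((j + 2) * (j + 1))" .
    moreover have "real ((j + 2) * (j + 1)) \<noteq> 0" by (simp only: of_nat_eq_0_iff) simp
    ultimately show ?thesis unfolding beta2_coeff_def of_nat_mult[symmetric] by simp
  qed
  moreover have "beta2_coeff \<beta> (k - 2) = real k * (real k - 1) * \<beta> k"
  proof -
    have "k - 2 + 2 = k" "k - 2 + 1 = k - 1" using k3 by simp_all
    then show ?thesis unfolding beta2_coeff_def using k3 by (simp add: of_nat_diff)
  qed
  moreover have "k - 2 = Suc (k - 3)" using k3 by simp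
  ultimately show ?thesis by simp
qed

lemma one_minus_mult_geometric_sum:
  fixes x c :: real
  assumes "3 \<le> k"
  shows "(1 - x) * ((\<Sum>j\<le>k-3. x ^ j) + c * x ^ (k - 2))
    = 1 + (c - 1) * x ^ (k - 2) - c * x ^ (k - 1)"
proof -
  have k: "k - 2 = Suc (k - 3)" "k - 1 = Suc (k - 2)" using assms by auto
  have "(1 - x) * (\<Sum>j\<le>k-3. x ^ j) = 1 - x ^ (k - 2)"
    unfolding k(1) by (rule sum_gp_basic)
  then show ?thesis unfolding k(2) by (simp add: algebra_simps)
qed

section \<open>Bounds on the breadth-first walk\<close>

lemma bfw_children_subset: "bfw_children N H ord i \<subseteq> {1..N} - set ord"
  unfolding bfw_children_def by auto

lemma finite_bfw_children: "finite (bfw_children N H ord i)"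
  using bfw_children_subset by (rule finite_subset) simp

lemma bfw_children_subset_bfw_step: "set ord \<union> bfw_children N H ord i \<subseteq> set (bfw_step N H ord i)"
  using finite_bfw_children[of N H ord i]
  unfolding bfw_step_def by (auto simp: Let_def bfw_children_def)

lemma sum_card_bfw_children_le:
  "(\<Sum>m<n. card (bfw_children N H (bfw_order N H m) m)) \<le> card (set (bfw_order N H n) \<inter> {1..N})"
proof (induction n)
  case 0
  then show ?case by simp
next
  case (Suc n)
  let ?A = "set (bfw_order N H n) \<inter> {1..N}"
  let ?B = "bfw_children N H (bfw_order N H n) n"
  have "card ?A + card ?B = card (?A \<union> ?B)"
    using bfw_children_subset[of N H "bfw_order N H n" n] finite_bfw_children
    by (intro card_Un_disjoint[symmetric]) auto
  also have "\<dots> \<le> card (set (bfw_order N H (Suc n)) \<inter> {1..N})"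
    using bfw_children_subset_bfw_step[of "bfw_order N H n" N H n]
      bfw_children_subset[of N H "bfw_order N H n" n]
    by (intro card_mono) auto
  finally show ?case using Suc by simp
qed

lemma Zw_eq_sum_children: "Zw N H n = int (\<Sum>m<n. card (bfw_children N H (bfw_order N H m) m)) - int n"
  by (induction n) (auto simp: Cnum_def)

lemma Zw_le: "Zw N H n \<le> int N - int n"
proof -
  have "card (set (bfw_order N H n) \<inter> {1..N}) \<le> N"
    using card_mono[of "{1..N}"] by simp
  then show ?thesis
    using Zw_eq_sum_children[of N H n] sum_card_bfw_children_le[where n=n and N=N and H=H]
    by (simp del: of_nat_sum)
qed

lemma Zw_ge: "- int n \<le> Zw N H n"
  using Zw_eq_sum_children[of N H n] by (simp del: of_nat_sum)

lemma Pw_bounds: "1 \<le> Pw N H n" "Pw N H n \<le> 1 + int n"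
proof -
  have "Zw N H 0 \<in> Zw N H ` {..n}" by blast
  then have "Min (Zw N H ` {..n}) \<le> Zw N H 0" by (intro Min_le) auto
  then show "1 \<le> Pw N H n" unfolding Pw_def using Zw.simps(1)[of N H] by linarith
  have "- int n \<le> Min (Zw N H ` {..n})"
    by (subst Min_ge_iff) (auto intro: order_trans[OF _ Zw_ge])
  then show "Pw N H n \<le> 1 + int n" unfolding Pw_def by linarith
qed

lemma Pt_bounds:
  assumes "nat \<lfloor>t\<rfloor> < N"
  shows "1 \<le> Pt N H t" "Pt N H t \<le> real N"
  using Pw_bounds[of N H "nat \<lfloor>t\<rfloor>"] assms unfolding Pt_def by linarith+

lemma abs_Zt_le:
  assumes ec: "exp_consistent N H E" and t: "0 \<le> t" "nat \<lfloor>t\<rfloor> < N"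
  shows "\<bar>Zt N H E t\<bar> \<le> real N + 1"
proof -
  define i where "i = nat \<lfloor>t\<rfloor>"
  define u where "u = t - real i"
  define S where "S v = {j. 1 \<le> j \<and> int j \<le> Mcount N H (Suc i) \<and> E (Suc i) j \<le> v}" for v
  have u: "0 \<le> u" "u < 1" unfolding u_def i_def using t by linarith+
  have "finite (S 1)" unfolding S_def
    by (rule finite_subset[of _ "{..nat (Mcount N H (Suc i))}"]) auto
  moreover have "S u \<subseteq> S 1" unfolding S_def using u by auto
  ultimately have "card (S u) \<le> card (S 1)" by (rule card_mono)
  also have "card (S 1) = Cnum N H (Suc i)"
    using ec t unfolding exp_consistent_def S_def i_def by auto
  finally have "Zw N H i + int (card (S u)) \<le> int N - int i"
    using Zw_le[of N H "Suc i"] by simp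
  then have up: "real_of_int (Zw N H i) + real (card (S u)) \<le> real N - real i" by linarith
  have low: "- real i \<le> real_of_int (Zw N H i)" using Zw_ge[of i N H] by linarith
  have "Zt N H E t = real_of_int (Zw N H i) - u + real (card (S u))"
    unfolding Zt_def S_def u_def i_def Let_def by simp
  moreover have "real i \<le> real N" using t unfolding i_def by simp
  ultimately show ?thesis using up low u by (simp add: abs_le_iff)
qed

lemma lambda2_nonneg:
  fixes \<beta> :: "nat \<Rightarrow> real"
  assumes "\<And>j. 2 \<le> j \<Longrightarrow> 0 \<le> \<beta> j"
  shows "0 \<le> lambda2 \<beta> N i"
  unfolding lambda2_def using assms
  by (intro mult_nonneg_nonneg sum_nonneg divide_nonneg_nonneg) auto

section \<open>Expansion of \<open>a\<^sub>N\<close>\<close>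

lemma lambda2_real_expansion_bound:
  fixes \<beta> :: "nat \<Rightarrow> real" and k :: nat and r :: real
  assumes nonneg: "\<And>j. 2 \<le> j \<Longrightarrow> 0 \<le> \<beta> j"
    and deriv_finite: "summable (\<lambda>j. real j * \<beta> j)"
    and k3: "3 \<le> k"
    and beta_low: "\<And>j. 2 \<le> j \<Longrightarrow> j \<le> k - 1 \<Longrightarrow> \<beta> j = 1 / (real j * (real j - 1))"
    and r: "0 \<le> r" "r < 1"
  obtains K where "0 \<le> K"
    and "\<And>N t. 4 \<le> (1 - r) * real N \<Longrightarrow> 0 \<le> t \<Longrightarrow> t \<le> r * real N \<Longrightarrow>
      \<bar>real N * lambda2_real \<beta> N t
        - ((\<Sum>j\<le>k-3. (t / real N) ^ j) + real k * (real k - 1) * \<beta> k * (t / real N) ^ (k - 2))\<bar>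
      \<le> K * (1 / real N + (t / real N) ^ (k - 1))"
proof
  define \<rho> where "\<rho> = (1 + r) / 2"
  have \<rho>: "0 < \<rho>" "\<rho> < 1" using r by (auto simp: \<rho>_def)
  have summable: "summable (\<lambda>j. beta2_coeff \<beta> j * \<rho> ^ j)"
    using summable_beta2_coeff[OF nonneg deriv_finite] \<rho> by simp
  have b: "0 \<le> beta2_coeff \<beta> j" for j using beta2_coeff_nonneg[OF nonneg] .
  define K1 where "K1 = 3 * (\<Sum>j\<le>k-2. beta2_coeff \<beta> j * (real j + 1)\<^sup>2)"
  define K2 where "K2 = 2 ^ k * (\<Sum>j. beta2_coeff \<beta> j * \<rho> ^ j) / \<rho> ^ (k - 1)"
  have K: "0 \<le> K1" "0 \<le> K2"
    using b \<rho> suminf_nonneg[OF summable] unfolding K1_def K2_def by (auto intro: sum_nonneg)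
  then show "0 \<le> K1 + K2" by simp
  fix N t
  assume N: "4 \<le> (1 - r) * real N" and t: "0 \<le> t" "t \<le> r * real N"
  have "(1 - r) * real N \<le> real N" using r by (simp add: mult_left_le_one_le)
  then have N4: "4 \<le> N" using N by linarith
  have kk: "k - 2 + 2 = k" "k - 2 + 1 = k - 1" using k3 by auto
  have "t \<le> \<rho> * (real N - 2)" using N t r by (simp add: \<rho>_def field_simps)
  from lambda2_expansion[OF nonneg summable \<rho>(1) less_imp_le[OF \<rho>(2)] N4 t(1) this, of "k - 2"]
  have "\<bar>real N * lambda2_real \<beta> N t - (\<Sum>j\<le>k-2. beta2_coeff \<beta> j * (t / real N) ^ j)\<bar>
      \<le> K1 / real N + K2 * (t / real N) ^ (k - 1)"
    unfolding kk K1_def K2_def .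
  also have "\<dots> \<le> (K1 + K2) * (1 / real N) + (K1 + K2) * (t / real N) ^ (k - 1)"
    using K t by (intro add_mono mult_right_mono) (auto simp: divide_right_mono)
  finally show "\<bar>real N * lambda2_real \<beta> N t
        - ((\<Sum>j\<le>k-3. (t / real N) ^ j) + real k * (real k - 1) * \<beta> k * (t / real N) ^ (k - 2))\<bar>
      \<le> (K1 + K2) * (1 / real N + (t / real N) ^ (k - 1))"
    by (simp only: sum_beta2_coeff_power_eq[OF k3 beta_low] distrib_left)
qed

lemma aN_expansion:
  fixes \<beta> :: "nat \<Rightarrow> real" and k N :: nat and r t e :: real
  assumes nonneg: "\<And>j. 2 \<le> j \<Longrightarrow> 0 \<le> \<beta> j"
    and deriv_finite: "summable (\<lambda>j. real j * \<beta> j)"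
    and k3: "3 \<le> k"
    and beta_low: "\<And>j. 2 \<le> j \<Longrightarrow> j \<le> k - 1 \<Longrightarrow> \<beta> j = 1 / (real j * (real j - 1))"
    and r: "r < 1" and N: "0 < N" and t: "0 \<le> t" "t \<le> r * real N"
    and ec: "exp_consistent N H E"
    and approx: "\<bar>real N * lambda2_real \<beta> N t
      - ((\<Sum>j\<le>k-3. (t / real N) ^ j) + real k * (real k - 1) * \<beta> k * (t / real N) ^ (k - 2))\<bar> \<le> e"
  shows "\<bar>aN \<beta> N H E t - 1 - (real k * (real k - 1) * \<beta> k - 1) * (t / real N) ^ (k - 2)\<bar>
    \<le> beta2 \<beta> r * (\<bar>Zt N H E t\<bar> + Pt N H t) / real N + 4 * e
      + real k * (real k - 1) * \<beta> k * (t / real N) ^ (k - 1)"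
proof -
  define c where "c = real k * (real k - 1) * \<beta> k"
  define x where "x = t / real N"
  define L where "L = real N * lambda2_real \<beta> N t"
  define S where "S = (\<Sum>j\<le>k-3. x ^ j) + c * x ^ (k - 2)"
  define q where "q = (\<bar>Zt N H E t\<bar> + Pt N H t) / real N"
  have x: "0 \<le> x" "x \<le> r" using t N unfolding x_def by (auto simp: field_simps)
  have "r * real N < real N" using r N by simp
  then have "t < real N" using t by linarith
  moreover have "real (nat \<lfloor>t\<rfloor>) \<le> t" using t(1) by linarith
  ultimately have floor_t: "nat \<lfloor>t\<rfloor> < N" by simp
  have q: "0 \<le> q" "q \<le> 3"
    using abs_Zt_le[OF ec t(1) floor_t] Pt_bounds[OF floor_t, of H] N
    unfolding q_def by (auto simp: field_simps)
  have L: "0 \<le> L" unfolding L_def lambda2_real_def using lambda2_nonneg[OF nonneg] by simp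
  have S: "S \<le> beta2 \<beta> r"
    using sum_beta2_coeff_le_beta2[OF nonneg deriv_finite x r, of "k - 2"]
    unfolding S_def c_def by (simp add: sum_beta2_coeff_power_eq[OF k3 beta_low])
  have "\<bar>(Zt N H E t + Pt N H t) / real N * L\<bar> \<le> q * L"
    using L N Pt_bounds[OF floor_t, of H] unfolding q_def
    by (simp add: abs_mult divide_right_mono mult_right_mono)
  also have "\<dots> \<le> q * (beta2 \<beta> r + e)"
    using approx S q unfolding L_def S_def c_def x_def by (intro mult_left_mono) auto
  also have "\<dots> \<le> beta2 \<beta> r * q + 3 * e"
    using q approx by (simp add: algebra_simps mult_left_mono order_trans[OF abs_ge_zero])
  finally have Z_part: "\<bar>(Zt N H E t + Pt N H t) / real N * L\<bar> \<le> beta2 \<beta> r * q + 3 * e" .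
  define W where "W = (Zt N H E t + Pt N H t) / real N * L"
  have "aN \<beta> N H E t = (1 - x) * L - W"
    unfolding aN_def L_def x_def W_def using N by (simp add: field_simps)
  then have "aN \<beta> N H E t - 1 - (c - 1) * x ^ (k - 2) = (1 - x) * (L - S) - c * x ^ (k - 1) - W"
    using one_minus_mult_geometric_sum[OF k3, of x c] unfolding S_def by (simp add: algebra_simps)
  moreover have "\<bar>(1 - x) * (L - S)\<bar> \<le> e"
  proof -
    have "\<bar>(1 - x) * (L - S)\<bar> = (1 - x) * \<bar>L - S\<bar>" using x r by (simp add: abs_mult)
    also have "\<dots> \<le> \<bar>L - S\<bar>" using x r by (intro mult_left_le_one_le) auto
    also have "\<dots> \<le> e" using approx unfolding L_def S_def c_def x_def .
    finally show ?thesis .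
  qed
  moreover have "0 \<le> c * x ^ (k - 1)" using nonneg[of k] k3 x unfolding c_def by simp
  ultimately have "\<bar>aN \<beta> N H E t - 1 - (c - 1) * x ^ (k - 2)\<bar> \<le> beta2 \<beta> r * q + 4 * e + c * x ^ (k - 1)"
    using Z_part abs_triangle_ineq4[of "(1 - x) * (L - S) - c * x ^ (k - 1)" W]
      abs_triangle_ineq4[of "(1 - x) * (L - S)" "c * x ^ (k - 1)"]
    unfolding W_def by simp
  then show ?thesis unfolding q_def c_def x_def by simp
qed

lemma inverse_le_ln_squared_div: "3 \<le> N \<Longrightarrow> 1 / real N \<le> (ln (real N))\<^sup>2 / real N"
proof -
  assume "3 \<le> N"
  then have "exp 1 \<le> real N" using exp_le by linarith
  then have "1 \<le> ln (real N)" using ln_ge_iff[of "real N" 1] \<open>3 \<le> N\<close> by simp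
  then show ?thesis by (simp add: divide_right_mono one_le_power)
qed

lemma lambda2_aN_expansion:
  fixes \<beta> :: "nat \<Rightarrow> real" and k :: nat and r :: real and \<delta> :: "nat \<Rightarrow> real"
  assumes nonneg: "\<And>j. 2 \<le> j \<Longrightarrow> 0 \<le> \<beta> j"
    and deriv_finite: "summable (\<lambda>j. real j * \<beta> j)"
    and k3: "3 \<le> k"
    and beta_low: "\<And>j. 2 \<le> j \<Longrightarrow> j \<le> k - 1 \<Longrightarrow> \<beta> j = 1 / (real j * (real j - 1))"
    and r: "0 \<le> r" "r < 1"
    and \<delta>: "\<And>N. 3 \<le> N \<Longrightarrow> 1 / real N \<le> \<delta> N"
  shows "\<exists>C::real. \<exists>N0::nat. \<forall>N\<ge>N0. \<forall>t::real. 0 \<le> t \<and> t \<le> r * real N \<longrightarrow>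
     \<bar>real N * lambda2_real \<beta> N t
        - ((\<Sum>i=0..k-3. (t / real N) ^ i) + real k * (real k - 1) * \<beta> k * (t / real N) ^ (k - 2))\<bar>
       \<le> C * (\<delta> N + (t / real N) ^ (k - 1))
     \<and> (\<forall>H E. exp_consistent N H E \<longrightarrow>
        \<bar>aN \<beta> N H E t - 1 - (real k * (real k - 1) * \<beta> k - 1) * (t / real N) ^ (k - 2)\<bar>
          \<le> beta2 \<beta> r * (\<bar>Zt N H E t\<bar> + Pt N H t) / real N
             + C * (\<delta> N + (t / real N) ^ (k - 1)))"
proof -
  obtain K where K: "0 \<le> K" and lambda2_bound: "\<And>N t. 4 \<le> (1 - r) * real N \<Longrightarrow> 0 \<le> t \<Longrightarrow> t \<le> r * real N \<Longrightarrow>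
      \<bar>real N * lambda2_real \<beta> N t
        - ((\<Sum>j\<le>k-3. (t / real N) ^ j) + real k * (real k - 1) * \<beta> k * (t / real N) ^ (k - 2))\<bar>
      \<le> K * (1 / real N + (t / real N) ^ (k - 1))"
    using lambda2_real_expansion_bound[OF nonneg deriv_finite k3 beta_low r] by blast
  define c where "c = real k * (real k - 1) * \<beta> k"
  have c: "0 \<le> c" using nonneg[of k] k3 unfolding c_def by simp
  show ?thesis
  proof (intro exI allI impI conjI)
    fix N t assume N: "nat \<lceil>4 / (1 - r)\<rceil> + 3 \<le> N" and t: "0 \<le> t \<and> t \<le> r * real N"
    define err where "err = \<delta> N + (t / real N) ^ (k - 1)"
    have \<delta>N: "1 / real N \<le> \<delta> N" using \<delta> N by simp
    have err: "0 \<le> err" "(t / real N) ^ (k - 1) \<le> err"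
      unfolding err_def using t order_trans[OF _ \<delta>N] by auto
    have "4 / (1 - r) \<le> real N" using N by linarith
    then have "4 \<le> (1 - r) * real N" using r by (simp add: field_simps)
    then have "\<bar>real N * lambda2_real \<beta> N t - ((\<Sum>j\<le>k-3. (t / real N) ^ j) + c * (t / real N) ^ (k - 2))\<bar>
        \<le> K * (1 / real N + (t / real N) ^ (k - 1))"
      using lambda2_bound t unfolding c_def by blast
    also have "\<dots> \<le> K * err" using K \<delta>N unfolding err_def by (intro mult_left_mono) auto
    finally have e: "\<bar>real N * lambda2_real \<beta> N t
        - ((\<Sum>j\<le>k-3. (t / real N) ^ j) + c * (t / real N) ^ (k - 2))\<bar> \<le> K * err" .
    have "K * err \<le> (4 * K + c) * err" using K c err by (intro mult_right_mono) auto
    with e show "\<bar>real N * lambda2_real \<beta> N t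
        - ((\<Sum>i=0..k-3. (t / real N) ^ i) + real k * (real k - 1) * \<beta> k * (t / real N) ^ (k - 2))\<bar>
       \<le> (4 * K + c) * (\<delta> N + (t / real N) ^ (k - 1))"
      unfolding atLeast0AtMost c_def[symmetric] err_def[symmetric] by linarith
    fix H E assume "exp_consistent N H E"
    with aN_expansion[OF nonneg deriv_finite k3 beta_low r(2) _ _ _ _ e[unfolded c_def]] N t
    have "\<bar>aN \<beta> N H E t - 1 - (c - 1) * (t / real N) ^ (k - 2)\<bar>
        \<le> beta2 \<beta> r * (\<bar>Zt N H E t\<bar> + Pt N H t) / real N + 4 * (K * err) + c * (t / real N) ^ (k - 1)"
      unfolding c_def by simp
    moreover have "c * (t / real N) ^ (k - 1) \<le> c * err" using c err by (intro mult_left_mono)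
    ultimately show "\<bar>aN \<beta> N H E t - 1 - (real k * (real k - 1) * \<beta> k - 1) * (t / real N) ^ (k - 2)\<bar>
        \<le> beta2 \<beta> r * (\<bar>Zt N H E t\<bar> + Pt N H t) / real N
          + (4 * K + c) * (\<delta> N + (t / real N) ^ (k - 1))"
      unfolding c_def[symmetric] err_def[symmetric] by (simp add: algebra_simps)
  qed
qed

theorem lemma6p2:
  fixes \<beta> :: "nat \<Rightarrow> real" and k :: nat and r :: real
  assumes nonneg: "\<And>j. 2 \<le> j \<Longrightarrow> 0 \<le> \<beta> j"
    and deriv_finite: "summable (\<lambda>j. real j * \<beta> j)"
    and k3: "3 \<le> k"
    and beta_low: "\<And>j. 2 \<le> j \<Longrightarrow> j \<le> k - 1 \<Longrightarrow> \<beta> j = 1 / (real j * (real j - 1))"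
    and r: "0 \<le> r" "r < 1"
  shows "\<exists>C::real. \<exists>N0::nat. \<forall>N\<ge>N0. \<forall>t::real. 0 \<le> t \<and> t \<le> r * real N \<longrightarrow>
     \<bar>real N * lambda2_real \<beta> N t
        - ((\<Sum>i=0..k-3. (t / real N) ^ i) + real k * (real k - 1) * \<beta> k * (t / real N) ^ (k - 2))\<bar>
       \<le> C * ((ln (real N))\<^sup>2 / real N + (t / real N) ^ (k - 1))
     \<and> (\<forall>H E. exp_consistent N H E \<longrightarrow>
        \<bar>aN \<beta> N H E t - 1 - (real k * (real k - 1) * \<beta> k - 1) * (t / real N) ^ (k - 2)\<bar>
          \<le> beta2 \<beta> r * (\<bar>Zt N H E t\<bar> + Pt N H t) / real N
             + C * ((ln (real N))\<^sup>2 / real N + (t / real N) ^ (k - 1)))"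
  using lambda2_aN_expansion[OF nonneg deriv_finite k3 beta_low r inverse_le_ln_squared_div] .

end
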